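(* If $f\in H^2(\mu)$ and $m\in\{0,1,2,\dots\}$, then $$\|f\|_{H^2(\mu)}^2\le (m+3)\sum_{\substack{n=-1\\ n\ne m}}^\infty\int_{-\infty}^\infty \left|f\!\left(\tfrac n2+iy\right)\right|^2\frac{|\Gamma(\frac n2+1+iy)|^2}{2\pi(n+1)!}\,dy.$$
   Context: $\Omega=\{z:\mathrm{Re}\,z\ge-\tfrac12\}$ and $\mu$ is the measure on $\Omega$ given by $d\mu=\sum_{n=-1}^\infty \frac{|\Gamma(\frac n2+iy+1)|^2}{2\pi(n+1)!}\,dy\,d\delta_{n/2}(x)$, supported on the lines $\mathrm{Re}\,z=n/2$; so $\|f\|^2_{L^2(\mu)}=\sum_{n=-1}^\infty\int|f(\frac n2+iy)|^2\frac{|\Gamma(\frac n2+1+iy)|^2}{2\pi(n+1)!}dy$. $H^2(\mu)$ is the closed linear span of $\{a^z=e^{z\ln a}:0<a\le1\}$ in $L^2(\mu)$. *)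

theory Defs
  imports "HOL-Analysis.Analysis"
begin

definition mu_weight :: "int \<Rightarrow> real \<Rightarrow> real" where
  "mu_weight n y = (cmod (Gamma (Complex (real_of_int n / 2 + 1) y)))^2
                   / (2 * pi * fact (nat (n + 1)))"

definition line_int :: "(complex \<Rightarrow> complex) \<Rightarrow> int \<Rightarrow> ennreal" where
  "line_int f n = (\<integral>\<^sup>+ y. ennreal ((cmod (f (Complex (real_of_int n / 2) y)))^2 * mu_weight n y) \<partial>lborel)"

text \<open>Squared L2(mu) norm: sum over n = -1, 0, 1, ... (index k = n + 1).\<close>
definition L2mu_normsq :: "(complex \<Rightarrow> complex) \<Rightarrow> ennreal" where
  "L2mu_normsq f = (\<Sum>k. line_int f (int k - 1))"

definition in_L2mu :: "(complex \<Rightarrow> complex) \<Rightarrow> bool" where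
  "in_L2mu f \<longleftrightarrow> (\<forall>n::int. n \<ge> -1 \<longrightarrow>
       (\<lambda>y. f (Complex (real_of_int n / 2) y)) \<in> borel_measurable lborel)
     \<and> L2mu_normsq f < \<infinity>"

definition expfun :: "real \<Rightarrow> complex \<Rightarrow> complex" where
  "expfun a z = exp (z * complex_of_real (ln a))"

definition span_exp :: "(complex \<Rightarrow> complex) set" where
  "span_exp = {g. \<exists>A c. finite A \<and> A \<subseteq> {0<..1} \<and> g = (\<lambda>z. \<Sum>a\<in>A. c a * expfun a z)}"

text \<open>H^2(mu): closure of span_exp in L2(mu).\<close>
definition H2mu :: "(complex \<Rightarrow> complex) \<Rightarrow> bool" where
  "H2mu f \<longleftrightarrow> in_L2mu f \<and>
     (\<forall>e>0. \<exists>g\<in>span_exp. L2mu_normsq (\<lambda>z. f z - g z) < ennreal e)"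

end

theory Submission
  imports Defs "HOL-Probability.Probability"
begin

(* Proof of Theorem 6.  Let T(f) = \<Sum>_{n\<ge>-1} I_n(f) be the squared L2(mu) norm, where I_n(f) is
   the weighted integral of |f|^2 over the line Re z = n/2, and let S_m(f) = \<Sum>_{n\<noteq>m} I_n(f).

   For h continuous, bounded and integrable on the real line,
      \<integral>|F h|^2 = 2\<pi> \<integral>|h|^2; proved by damping |F h|^2 with a Gaussian, applying Fubini,
      and letting the damping tend to 1 (monotone and dominated convergence).
   2. Lines as Fourier transforms.  For g(z) = \<Sum> c_a a^z and \<sigma> = n/2 + 1 the substitution
      x = e^t/a in Euler's integral shows \<Gamma>(\<sigma>+iy) g(\<sigma>-1+iy) = F h(y) with
      h(t) = e^{\<sigma>t} W(t), W(t) = \<Sum> (c_a/a) exp(-e^t/a).  By Plancherel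
      I_n(g) = \<integral> e^{(n+2)t} |W(t)|^2 dt / (n+1)!.
   3. Three lines.  The elementary inequality E^{m+2}/(m+1)! \<le> (m+2)(E^{m+1}/m! + E^{m+3}/(m+2)!)
      (E = e^t > 0), integrated against |W|^2, gives I_m(g) \<le> (m+2)(I_{m-1}(g) + I_{m+1}(g)),
      hence T(g) \<le> (m+3) S_m(g) on the span of the exponentials a^z.
   4. Density.  Using |a+b|^2 \<le> (1+\<delta>)|a|^2 + (1+1/\<delta>)|b|^2 both T and S_m are controlled
      under approximation in L2(mu); approximating f by g with T(f-g) < \<delta>^2 and letting
      \<delta> \<rightarrow> 0 transfers the inequality to the closure H2(mu). *)

text \<open>Fourier transform of the standard Gaussian, read off from the characteristic function
  of the standard normal distribution.\<close>
lemma gauss_fourier: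
  "(\<integral>x. exp (\<i> * complex_of_real (t * x)) * complex_of_real (exp (- x\<^sup>2 / 2)) \<partial>lborel)
     = complex_of_real (sqrt (2*pi) * exp (- t\<^sup>2 / 2))"
proof -
  have "char std_normal_distribution t = complex_of_real (exp (- t\<^sup>2 / 2))"
    by (simp add: char_std_normal_distribution)
  moreover have "char std_normal_distribution t =
      (\<integral>x. complex_of_real (std_normal_density x) * exp (\<i> * complex_of_real (t * x)) \<partial>lborel)"
    unfolding char_def
    by (subst integral_density) (auto simp: normal_density_nonneg scaleR_conv_of_real)
  moreover have "(\<integral>x. complex_of_real (std_normal_density x) * exp (\<i> * complex_of_real (t * x)) \<partial>lborel)
     = complex_of_real (1 / sqrt (2*pi)) * (\<integral>x. exp (\<i> * complex_of_real (t * x)) * complex_of_real (exp (- x\<^sup>2 / 2)) \<partial>lborel)"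
    by (simp add: std_normal_density_def mult_ac flip: integral_mult_right_zero)
  ultimately show ?thesis
    by (auto simp: field_simps of_real_mult)
qed

lemma gauss_fourier_scaled:
  fixes \<delta> :: real
  assumes d: "\<delta> > 0"
  shows "(\<integral>y. complex_of_real (exp (- (\<delta>*y)\<^sup>2 / 2)) * exp (\<i> * complex_of_real (y * v)) \<partial>lborel)
     = complex_of_real (sqrt (2*pi) / \<delta> * exp (- (v/\<delta>)\<^sup>2 / 2))"
proof -
  have "(\<integral>x. exp (\<i> * complex_of_real ((v/\<delta>) * x)) * complex_of_real (exp (- x\<^sup>2 / 2)) \<partial>lborel)
      = \<bar>\<delta>\<bar> *\<^sub>R (\<integral>y. exp (\<i> * complex_of_real ((v/\<delta>) * (0 + \<delta>*y))) * complex_of_real (exp (- (0 + \<delta>*y)\<^sup>2 / 2)) \<partial>lborel)"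
    by (rule lborel_integral_real_affine) (use d in auto)
  also have "(\<lambda>y. exp (\<i> * complex_of_real ((v/\<delta>) * (0 + \<delta>*y))) * complex_of_real (exp (- (0 + \<delta>*y)\<^sup>2 / 2)))
      = (\<lambda>y. complex_of_real (exp (- (\<delta>*y)\<^sup>2 / 2)) * exp (\<i> * complex_of_real (y * v)))"
    using d by (auto simp: field_simps)
  finally have "complex_of_real (sqrt (2*pi) * exp (- (v/\<delta>)\<^sup>2 / 2)) = \<delta> *\<^sub>R
     (\<integral>y. complex_of_real (exp (- (\<delta>*y)\<^sup>2 / 2)) * exp (\<i> * complex_of_real (y * v)) \<partial>lborel)"
    using d by (simp only: gauss_fourier) simp
  then show ?thesis using d
    by (simp add: scaleR_conv_of_real field_simps of_real_mult)
qed

lemma gauss_integral: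
  fixes \<delta> :: real
  assumes d: "\<delta> > 0"
  shows "integrable lborel (\<lambda>y. exp (- (\<delta>*y)\<^sup>2 / 2))"
    and "(\<integral>y. exp (- (\<delta>*y)\<^sup>2 / 2) \<partial>lborel) = sqrt (2*pi) / \<delta>"
proof -
  have nd: "(\<lambda>y. exp (- (\<delta>*y)\<^sup>2 / 2)) = (\<lambda>y. (sqrt (2*pi) / \<delta>) * normal_density 0 (1/\<delta>) y)"
  proof
    fix y
    have "sqrt (2 * pi * (1/\<delta>)\<^sup>2) = sqrt (2*pi) / \<delta>"
      using d by (simp add: real_sqrt_mult real_sqrt_divide)
    then show "exp (- (\<delta>*y)\<^sup>2 / 2) = (sqrt (2*pi) / \<delta>) * normal_density 0 (1/\<delta>) y"
      unfolding normal_density_def using d by (simp add: field_simps power2_eq_square)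
  qed
  show "integrable lborel (\<lambda>y. exp (- (\<delta>*y)\<^sup>2 / 2))"
    unfolding nd using d by (intro integrable_mult_right integrable_normal_density) auto
  have "(\<integral>y. normal_density 0 (1/\<delta>) y \<partial>lborel) = 1"
    using integral_normal_density[where \<sigma>="1/\<delta>" and \<mu>=0] d by simp
  then show "(\<integral>y. exp (- (\<delta>*y)\<^sup>2 / 2) \<partial>lborel) = sqrt (2*pi) / \<delta>"
    unfolding nd by simp
qed

lemma gauss_std_integral:
  "integrable lborel (\<lambda>x::real. exp (- x\<^sup>2 / 2))" "(\<integral>x. exp (- (x\<^sup>2 / 2)) \<partial>lborel) = sqrt (2*pi)"
  using gauss_integral[of 1] by simp_all

lemma integrable_pair_bound:
  fixes \<Phi> :: "'a \<times> 'b \<Rightarrow> 'c::{banach, second_countable_topology}"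
  assumes M: "sigma_finite_measure M" and N: "sigma_finite_measure N"
    and Phi[measurable]: "\<Phi> \<in> borel_measurable (M \<Otimes>\<^sub>M N)"
    and a: "integrable M a" and b: "integrable N b"
    and a0: "\<And>x. a x \<ge> 0" and b0: "\<And>y. b y \<ge> 0"
    and bd: "\<And>x y. x \<in> space M \<Longrightarrow> y \<in> space N \<Longrightarrow> norm (\<Phi> (x,y)) \<le> a x * b y"
  shows "integrable (M \<Otimes>\<^sub>M N) \<Phi>"
proof -
  interpret pair_sigma_finite M N using M N by (simp add: pair_sigma_finite_def)
  have am[measurable]: "a \<in> borel_measurable M" using a by auto
  have bm[measurable]: "b \<in> borel_measurable N" using b by auto
  have "integrable (M \<Otimes>\<^sub>M N) (\<lambda>p. a (fst p) * b (snd p))"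
  proof (rule Fubini_integrable)
    show "(\<lambda>p. a (fst p) * b (snd p)) \<in> borel_measurable (M \<Otimes>\<^sub>M N)" by measurable
    have "(\<lambda>x. \<integral>y. norm (a (fst (x, y)) * b (snd (x, y))) \<partial>N) = (\<lambda>x. a x * integral\<^sup>L N b)"
      using a0 b0 by (simp add: abs_mult)
    then show "integrable M (\<lambda>x. \<integral>y. norm (a (fst (x, y)) * b (snd (x, y))) \<partial>N)"
      using a by simp
    show "AE x in M. integrable N (\<lambda>y. a (fst (x, y)) * b (snd (x, y)))"
      using b by simp
  qed
  then show ?thesis
  proof (rule Bochner_Integration.integrable_bound)
    show "AE x in M \<Otimes>\<^sub>M N. norm (\<Phi> x) \<le> norm (a (fst x) * b (snd x))"
      using bd a0 b0 by (intro AE_I2) (auto simp: space_pair_measure abs_mult)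
  qed measurable
qed

lemma sigma_finite_lborel2: "sigma_finite_measure (lborel \<Otimes>\<^sub>M lborel :: (real \<times> real) measure)"
  by (intro sigma_finite_pair_measure lborel.sigma_finite_measure_axioms)

text \<open>Fourier transform (without normalising constant), the Gaussian damping factor used to
  regularise |F h|^2, the corresponding heat kernel (its Fourier transform), and the
  Gaussian smoothing of h that results from integrating against the kernel.\<close>
definition fourier :: "(real \<Rightarrow> complex) \<Rightarrow> real \<Rightarrow> complex" where
  "fourier h y = (\<integral>t. exp (\<i> * complex_of_real (y * t)) * h t \<partial>lborel)"

definition gauss_damp :: "real \<Rightarrow> real \<Rightarrow> real" where
  "gauss_damp \<delta> y = exp (- (\<delta>*y)\<^sup>2 / 2)"

definition heat_kernel :: "real \<Rightarrow> real \<Rightarrow> real" where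
  "heat_kernel \<delta> v = sqrt (2*pi) / \<delta> * exp (- (v/\<delta>)\<^sup>2 / 2)"

definition smoothing :: "(real \<Rightarrow> complex) \<Rightarrow> real \<Rightarrow> real \<Rightarrow> complex" where
  "smoothing h \<delta> u = (\<integral>x. h (u + \<delta>*x) * complex_of_real (sqrt (2*pi) * exp (- x\<^sup>2 / 2)) \<partial>lborel)"

lemma gauss_damp_range: "0 \<le> gauss_damp \<delta> y" "gauss_damp \<delta> y \<le> 1"
  unfolding gauss_damp_def by auto

lemma gauss_damp_incseq: "incseq (\<lambda>n. gauss_damp (inverse (real (Suc n))) y)"
proof (rule incseq_SucI)
  fix n
  have "inverse (real (Suc (Suc n))) \<le> inverse (real (Suc n))" by (rule le_imp_inverse_le) auto
  then have "(inverse (real (Suc (Suc n))) * y)\<^sup>2 \<le> (inverse (real (Suc n)) * y)\<^sup>2"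
    unfolding power_mult_distrib by (intro mult_right_mono power_mono) auto
  then show "gauss_damp (inverse (real (Suc n))) y \<le> gauss_damp (inverse (real (Suc (Suc n)))) y"
    unfolding gauss_damp_def by simp
qed

lemma gauss_damp_tendsto: "(\<lambda>n. gauss_damp (inverse (real (Suc n))) y) \<longlonglongrightarrow> 1"
proof -
  have "(\<lambda>n. gauss_damp (inverse (real (Suc n))) y) \<longlonglongrightarrow> exp (- (0 * y)\<^sup>2 / 2)"
    unfolding gauss_damp_def by (intro tendsto_intros LIMSEQ_inverse_real_of_nat) auto
  then show ?thesis by simp
qed

lemma heat_kernel_bound:
  assumes d: "\<delta> > 0"
  shows "0 \<le> heat_kernel \<delta> v" "heat_kernel \<delta> v \<le> sqrt (2*pi) / \<delta>"
proof -
  have "sqrt (2*pi) / \<delta> * exp (- (v/\<delta>)\<^sup>2 / 2) \<le> sqrt (2*pi) / \<delta> * 1"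
    by (rule mult_left_mono) (use d in simp_all)
  then show "0 \<le> heat_kernel \<delta> v" "heat_kernel \<delta> v \<le> sqrt (2*pi) / \<delta>"
    using d unfolding heat_kernel_def by simp_all
qed

text \<open>Throughout the Plancherel argument h is continuous, integrable and bounded by B; boundedness
  makes the Gaussian smoothings of h uniformly bounded, which drives dominated convergence.\<close>
context
  fixes h :: "real \<Rightarrow> complex" and B :: real
  assumes cont: "continuous_on UNIV h" and int: "integrable lborel h"
    and bnd: "\<And>t. norm (h t) \<le> B"
begin

lemma h_measurable[measurable]: "h \<in> borel_measurable borel"
  using cont by (rule borel_measurable_continuous_onI)

lemma cnj_h_measurable[measurable]: "(\<lambda>x. cnj (h x)) \<in> borel_measurable borel"
  by (rule borel_measurable_continuous_onI) (intro continuous_intros cont)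

lemma bound_nonneg: "B \<ge> 0"
  using bnd[of 0] norm_ge_zero order_trans by blast

lemma integrable_norm_h: "integrable lborel (\<lambda>t. norm (h t))"
  using int by auto

lemma fourier_norm_le: "norm (fourier h y) \<le> (\<integral>t. norm (h t) \<partial>lborel)"
proof -
  have "norm (fourier h y) \<le> (\<integral>t. norm (exp (\<i> * complex_of_real (y * t)) * h t) \<partial>lborel)"
    unfolding fourier_def by (rule integral_norm_bound)
  then show ?thesis by (simp add: norm_mult)
qed

lemma fourier_measurable[measurable]: "fourier h \<in> borel_measurable borel"
  unfolding fourier_def[abs_def] by measurable

lemma fourier_sq_double_integral:
  "fourier h y * cnj (fourier h y) = (\<integral>p. h (snd p) * cnj (h (fst p)) *
       exp (\<i> * complex_of_real (y * (snd p - fst p))) \<partial>(lborel \<Otimes>\<^sub>M lborel))"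
proof -
  have "integrable (lborel \<Otimes>\<^sub>M lborel)
     (\<lambda>p. h (snd p) * cnj (h (fst p)) * exp (\<i> * complex_of_real (y * (snd p - fst p))))"
    by (rule integrable_pair_bound[OF lborel.sigma_finite_measure_axioms
          lborel.sigma_finite_measure_axioms _ integrable_norm_h integrable_norm_h])
       (auto simp: norm_mult)
  then have "(\<integral>p. h (snd p) * cnj (h (fst p)) * exp (\<i> * complex_of_real (y * (snd p - fst p))) \<partial>(lborel \<Otimes>\<^sub>M lborel))
     = (\<integral>u. \<integral>t. h t * cnj (h u) * exp (\<i> * complex_of_real (y * (t - u))) \<partial>lborel \<partial>lborel)"
    using lborel_pair.integral_fst' by fastforce
  also have "\<dots> = (\<integral>u. cnj (exp (\<i> * complex_of_real (y * u)) * h u) * fourier h y \<partial>lborel)"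
  proof (rule Bochner_Integration.integral_cong[OF refl])
    fix u
    have "(\<lambda>t. h t * cnj (h u) * exp (\<i> * complex_of_real (y * (t - u))))
        = (\<lambda>t. cnj (exp (\<i> * complex_of_real (y * u)) * h u) * (exp (\<i> * complex_of_real (y * t)) * h t))"
      by (auto simp: algebra_simps exp_diff exp_cnj field_simps simp flip: exp_add)
    then show "(\<integral>t. h t * cnj (h u) * exp (\<i> * complex_of_real (y * (t - u))) \<partial>lborel)
       = cnj (exp (\<i> * complex_of_real (y * u)) * h u) * fourier h y"
      unfolding fourier_def by simp
  qed
  also have "\<dots> = cnj (fourier h y) * fourier h y"
    unfolding fourier_def by (simp only: integral_mult_left_zero Bochner_Integration.integral_cnj)
  finally show ?thesis by (simp add: mult.commute)
qed

lemma damped_energy_kernel: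
  assumes d: "\<delta> > 0"
  shows "(\<integral>y. complex_of_real (gauss_damp \<delta> y) * (fourier h y * cnj (fourier h y)) \<partial>lborel)
     = (\<integral>p. h (snd p) * cnj (h (fst p)) * complex_of_real (heat_kernel \<delta> (snd p - fst p)) \<partial>(lborel \<Otimes>\<^sub>M lborel))"
proof -
  interpret P3: pair_sigma_finite "lborel :: real measure" "lborel \<Otimes>\<^sub>M lborel :: (real \<times> real) measure"
    by (simp add: pair_sigma_finite_def lborel.sigma_finite_measure_axioms sigma_finite_lborel2)
  define F where "F = (\<lambda>y (p::real\<times>real). complex_of_real (gauss_damp \<delta> y) *
      (h (snd p) * cnj (h (fst p)) * exp (\<i> * complex_of_real (y * (snd p - fst p)))))"
  have hh: "integrable (lborel \<Otimes>\<^sub>M lborel) (\<lambda>p. norm (h (fst p)) * norm (h (snd p)))"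
    by (rule integrable_pair_bound[OF lborel.sigma_finite_measure_axioms
          lborel.sigma_finite_measure_axioms _ integrable_norm_h integrable_norm_h]) auto
  have "integrable (lborel \<Otimes>\<^sub>M (lborel \<Otimes>\<^sub>M lborel)) (case_prod F)"
    by (rule integrable_pair_bound[OF lborel.sigma_finite_measure_axioms sigma_finite_lborel2
          _ gauss_integral(1)[OF d] hh])
       (auto simp: F_def gauss_damp_def norm_mult)
  then have "(\<integral>y. \<integral>p. F y p \<partial>(lborel \<Otimes>\<^sub>M lborel) \<partial>lborel) = (\<integral>p. \<integral>y. F y p \<partial>lborel \<partial>(lborel \<Otimes>\<^sub>M lborel))"
    by (rule P3.Fubini_integral[symmetric])
  moreover have "(\<integral>y. F y p \<partial>lborel) = h (snd p) * cnj (h (fst p)) * complex_of_real (heat_kernel \<delta> (snd p - fst p))"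
    for p :: "real \<times> real"
  proof -
    have "(\<lambda>y. F y p) = (\<lambda>y. (h (snd p) * cnj (h (fst p))) *
        (complex_of_real (exp (- (\<delta>*y)\<^sup>2 / 2)) * exp (\<i> * complex_of_real (y * (snd p - fst p)))))"
      unfolding F_def gauss_damp_def by (auto simp: mult_ac)
    then show ?thesis
      using gauss_fourier_scaled[OF d, of "snd p - fst p"] by (simp add: heat_kernel_def)
  qed
  ultimately show ?thesis
    unfolding F_def fourier_sq_double_integral by simp
qed

lemma smoothing_integrable:
  "integrable lborel (\<lambda>x. h (u + \<delta>*x) * complex_of_real (sqrt (2*pi) * exp (- x\<^sup>2 / 2)))"
proof (rule Bochner_Integration.integrable_bound)
  show "integrable lborel (\<lambda>x. B * (sqrt (2*pi) * exp (- x\<^sup>2 / 2)))"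
    using gauss_std_integral(1) by (intro integrable_mult_right)
  show "AE x in lborel. norm (h (u + \<delta>*x) * complex_of_real (sqrt (2*pi) * exp (- x\<^sup>2 / 2)))
      \<le> norm (B * (sqrt (2*pi) * exp (- x\<^sup>2 / 2)))"
    using bnd bound_nonneg by (intro AE_I2) (auto simp: norm_mult intro!: mult_right_mono)
qed measurable

lemma kernel_smoothing:
  assumes d: "\<delta> > 0"
  shows "(\<integral>t. h t * complex_of_real (heat_kernel \<delta> (t - u)) \<partial>lborel) = smoothing h \<delta> u"
proof -
  have "(\<integral>t. h t * complex_of_real (heat_kernel \<delta> (t - u)) \<partial>lborel)
     = \<bar>\<delta>\<bar> *\<^sub>R (\<integral>x. h (u + \<delta>*x) * complex_of_real (heat_kernel \<delta> ((u + \<delta>*x) - u)) \<partial>lborel)"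
    by (rule lborel_integral_real_affine) (use d in auto)
  moreover have "(\<lambda>x. h (u + \<delta>*x) * complex_of_real (heat_kernel \<delta> ((u + \<delta>*x) - u)))
     = (\<lambda>x. complex_of_real (1/\<delta>) * (h (u + \<delta>*x) * complex_of_real (sqrt (2*pi) * exp (- x\<^sup>2 / 2))))"
    using d by (auto simp: heat_kernel_def field_simps)
  ultimately show ?thesis
    using d unfolding smoothing_def by (simp add: scaleR_conv_of_real)
qed

lemma kernel_double_integral:
  assumes d: "\<delta> > 0"
  shows "(\<integral>p. h (snd p) * cnj (h (fst p)) * complex_of_real (heat_kernel \<delta> (snd p - fst p)) \<partial>(lborel \<Otimes>\<^sub>M lborel))
     = (\<integral>u. cnj (h u) * smoothing h \<delta> u \<partial>lborel)"
proof -
  have "integrable (lborel \<Otimes>\<^sub>M lborel)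
      (\<lambda>p. h (snd p) * cnj (h (fst p)) * complex_of_real (heat_kernel \<delta> (snd p - fst p)))"
  proof (rule integrable_pair_bound[OF lborel.sigma_finite_measure_axioms
          lborel.sigma_finite_measure_axioms _ integrable_norm_h])
    show "integrable lborel (\<lambda>t. norm (h t) * (sqrt (2*pi) / \<delta>))"
      using integrable_norm_h by simp
    show "norm (h (snd (x, y)) * cnj (h (fst (x, y))) * complex_of_real (heat_kernel \<delta> (snd (x, y) - fst (x, y))))
        \<le> norm (h x) * (norm (h y) * (sqrt (2*pi) / \<delta>))" for x y
    proof -
      have "norm (h (snd (x, y)) * cnj (h (fst (x, y))) * complex_of_real (heat_kernel \<delta> (snd (x, y) - fst (x, y))))
          = norm (h x) * (norm (h y) * heat_kernel \<delta> (y - x))"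
        using heat_kernel_bound[OF d, of "y - x"] by (simp add: norm_mult)
      also have "\<dots> \<le> norm (h x) * (norm (h y) * (sqrt (2*pi) / \<delta>))"
        using heat_kernel_bound[OF d, of "y - x"] by (intro mult_left_mono) auto
      finally show ?thesis .
    qed
  qed (use d in \<open>auto simp: heat_kernel_def\<close>)
  then have "(\<integral>p. h (snd p) * cnj (h (fst p)) * complex_of_real (heat_kernel \<delta> (snd p - fst p)) \<partial>(lborel \<Otimes>\<^sub>M lborel))
    = (\<integral>u. \<integral>t. cnj (h u) * (h t * complex_of_real (heat_kernel \<delta> (t - u))) \<partial>lborel \<partial>lborel)"
    using lborel_pair.integral_fst' by (fastforce simp: mult_ac)
  then show ?thesis
    by (simp add: kernel_smoothing[OF d])
qed

lemma smoothing_bound: "norm (smoothing h \<delta> u) \<le> B * (2*pi)"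
proof -
  have "norm (smoothing h \<delta> u) \<le> (\<integral>x. B * (sqrt (2*pi) * exp (- x\<^sup>2 / 2)) \<partial>lborel)"
    unfolding smoothing_def
    by (rule Bochner_Integration.integral_norm_bound_integral[OF smoothing_integrable])
       (use gauss_std_integral(1) bnd bound_nonneg in \<open>auto simp: norm_mult intro!: mult_right_mono\<close>)
  also have "\<dots> = B * (2*pi)"
    by (simp add: gauss_std_integral(2))
  finally show ?thesis .
qed

lemma smoothing_measurable[measurable]: "smoothing h \<delta> \<in> borel_measurable borel"
  unfolding smoothing_def[abs_def] by measurable

lemma smoothing_tendsto: "(\<lambda>n. smoothing h (inverse (real (Suc n))) u) \<longlonglongrightarrow> h u * complex_of_real (2*pi)"
proof -
  have "(\<lambda>n. smoothing h (inverse (real (Suc n))) u) \<longlonglongrightarrow>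
        (\<integral>x. h u * complex_of_real (sqrt (2*pi) * exp (- x\<^sup>2 / 2)) \<partial>lborel)"
    unfolding smoothing_def
  proof (rule integral_dominated_convergence[where w="\<lambda>x. B * (sqrt (2*pi) * exp (- x\<^sup>2 / 2))"])
    show "integrable lborel (\<lambda>x. B * (sqrt (2*pi) * exp (- x\<^sup>2 / 2)))"
      using gauss_std_integral(1) by (intro integrable_mult_right)
    show "AE x in lborel. (\<lambda>n. h (u + inverse (real (Suc n)) * x) * complex_of_real (sqrt (2*pi) * exp (- x\<^sup>2 / 2)))
        \<longlonglongrightarrow> h u * complex_of_real (sqrt (2*pi) * exp (- x\<^sup>2 / 2))"
    proof (intro AE_I2 tendsto_mult tendsto_const)
      fix x :: real
      have "(\<lambda>n. u + inverse (real (Suc n)) * x) \<longlonglongrightarrow> u + 0 * x"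
        by (intro tendsto_intros LIMSEQ_inverse_real_of_nat)
      moreover have "isCont h u"
        using cont continuous_on_eq_continuous_at[of UNIV h] by simp
      ultimately show "(\<lambda>n. h (u + inverse (real (Suc n)) * x)) \<longlonglongrightarrow> h u"
        using isCont_tendsto_compose by fastforce
    qed
    show "AE x in lborel. norm (h (u + inverse (real (Suc n)) * x) * complex_of_real (sqrt (2*pi) * exp (- x\<^sup>2 / 2)))
        \<le> B * (sqrt (2*pi) * exp (- x\<^sup>2 / 2))" for n
      using bnd by (intro AE_I2) (auto simp: norm_mult intro!: mult_right_mono)
  qed measurable
  also have "(\<integral>x. h u * complex_of_real (sqrt (2*pi) * exp (- x\<^sup>2 / 2)) \<partial>lborel) = h u * complex_of_real (2*pi)"
    by (simp add: gauss_std_integral(2) flip: of_real_mult)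
  finally show ?thesis .
qed

lemma damped_energy_integrable:
  assumes d: "\<delta> > 0"
  shows "integrable lborel (\<lambda>y. (norm (fourier h y))\<^sup>2 * gauss_damp \<delta> y)"
proof (rule Bochner_Integration.integrable_bound)
  define L where "L = (\<integral>t. norm (h t) \<partial>lborel)"
  show "integrable lborel (\<lambda>y. L\<^sup>2 * gauss_damp \<delta> y)"
    unfolding gauss_damp_def using gauss_integral(1)[OF d] by (intro integrable_mult_right)
  show "AE y in lborel. norm ((norm (fourier h y))\<^sup>2 * gauss_damp \<delta> y) \<le> norm (L\<^sup>2 * gauss_damp \<delta> y)"
  proof (intro AE_I2)
    fix y
    have "(norm (fourier h y))\<^sup>2 \<le> L\<^sup>2"
      unfolding L_def by (intro power_mono fourier_norm_le) auto
    then show "norm ((norm (fourier h y))\<^sup>2 * gauss_damp \<delta> y) \<le> norm (L\<^sup>2 * gauss_damp \<delta> y)"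
      using gauss_damp_range[of \<delta> y] by (simp add: abs_mult mult_right_mono)
  qed
qed (simp add: gauss_damp_def)

lemma damped_energy_eq:
  assumes d: "\<delta> > 0"
  shows "complex_of_real (\<integral>y. (norm (fourier h y))\<^sup>2 * gauss_damp \<delta> y \<partial>lborel)
     = (\<integral>u. cnj (h u) * smoothing h \<delta> u \<partial>lborel)"
proof -
  have "complex_of_real (\<integral>y. (norm (fourier h y))\<^sup>2 * gauss_damp \<delta> y \<partial>lborel)
      = (\<integral>y. complex_of_real (gauss_damp \<delta> y) * (fourier h y * cnj (fourier h y)) \<partial>lborel)"
    by (simp add: complex_norm_square[symmetric] mult.commute flip: integral_complex_of_real)
  then show ?thesis
    using damped_energy_kernel[OF d] kernel_double_integral[OF d] by simp
qed

lemma damped_energy_tendsto: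
  "(\<lambda>n. \<integral>y. (norm (fourier h y))\<^sup>2 * gauss_damp (inverse (real (Suc n))) y \<partial>lborel)
     \<longlonglongrightarrow> 2*pi * (\<integral>t. (norm (h t))\<^sup>2 \<partial>lborel)"
proof -
  have "(\<lambda>n. \<integral>u. cnj (h u) * smoothing h (inverse (real (Suc n))) u \<partial>lborel)
     \<longlonglongrightarrow> (\<integral>u. cnj (h u) * (h u * complex_of_real (2*pi)) \<partial>lborel)"
  proof (rule integral_dominated_convergence[where w="\<lambda>u. norm (h u) * (B * (2*pi))"])
    show "integrable lborel (\<lambda>u. norm (h u) * (B * (2*pi)))"
      using integrable_norm_h by simp
    show "AE x in lborel. (\<lambda>n. cnj (h x) * smoothing h (inverse (real (Suc n))) x)
        \<longlonglongrightarrow> cnj (h x) * (h x * complex_of_real (2*pi))"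
      by (intro AE_I2 tendsto_mult tendsto_const smoothing_tendsto)
    show "AE x in lborel. norm (cnj (h x) * smoothing h (inverse (real (Suc n))) x) \<le> norm (h x) * (B * (2*pi))" for n
      using smoothing_bound by (intro AE_I2) (auto simp: norm_mult intro!: mult_left_mono)
  qed measurable
  moreover have "(\<integral>u. cnj (h u) * (h u * complex_of_real (2*pi)) \<partial>lborel)
     = complex_of_real (2*pi * (\<integral>t. (norm (h t))\<^sup>2 \<partial>lborel))"
  proof -
    have pw: "cnj (h u) * (h u * complex_of_real (2*pi)) = complex_of_real (2*pi * (norm (h u))\<^sup>2)" for u
      by (simp only: of_real_mult complex_norm_square) (simp add: mult_ac)
    have "(\<integral>u. cnj (h u) * (h u * complex_of_real (2*pi)) \<partial>lborel)
        = (\<integral>u. complex_of_real (2*pi * (norm (h u))\<^sup>2) \<partial>lborel)"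
      by (rule Bochner_Integration.integral_cong[OF refl pw])
    then show ?thesis
      by (simp only: integral_complex_of_real integral_mult_right_zero)
  qed
  ultimately have "(\<lambda>n. complex_of_real (\<integral>y. (norm (fourier h y))\<^sup>2 * gauss_damp (inverse (real (Suc n))) y \<partial>lborel))
     \<longlonglongrightarrow> complex_of_real (2*pi * (\<integral>t. (norm (h t))\<^sup>2 \<partial>lborel))"
    by (simp add: damped_energy_eq)
  then show ?thesis
    using tendsto_Re by fastforce
qed

text \<open>Plancherel's theorem for continuous, bounded, integrable h: letting the damping increase
  to 1, monotone convergence identifies the limit of the regularised energies.\<close>
theorem plancherel:
  "(\<integral>\<^sup>+y. ennreal ((norm (fourier h y))\<^sup>2) \<partial>lborel) = ennreal (2*pi * (\<integral>t. (norm (h t))\<^sup>2 \<partial>lborel))"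
proof -
  define F where "F n y = ennreal ((norm (fourier h y))\<^sup>2 * gauss_damp (inverse (real (Suc n))) y)" for n y
  have "(\<lambda>n. \<integral>\<^sup>+y. F n y \<partial>lborel) \<longlonglongrightarrow> (\<integral>\<^sup>+y. ennreal ((norm (fourier h y))\<^sup>2) \<partial>lborel)"
  proof (rule nn_integral_LIMSEQ)
    show "incseq F"
      using gauss_damp_incseq unfolding F_def incseq_def
      by (auto intro!: le_funI ennreal_leI mult_left_mono)
    show "F n \<in> borel_measurable lborel" for n
      unfolding F_def gauss_damp_def by measurable
    show "(\<lambda>n. F n y) \<longlonglongrightarrow> ennreal ((norm (fourier h y))\<^sup>2)" for y
      using tendsto_ennrealI[OF tendsto_mult[OF tendsto_const gauss_damp_tendsto]]
      unfolding F_def by simp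
  qed
  moreover have "(\<lambda>n. \<integral>\<^sup>+y. F n y \<partial>lborel) \<longlonglongrightarrow> ennreal (2*pi * (\<integral>t. (norm (h t))\<^sup>2 \<partial>lborel))"
  proof -
    have eq: "(\<integral>\<^sup>+y. F n y \<partial>lborel)
        = ennreal (\<integral>y. (norm (fourier h y))\<^sup>2 * gauss_damp (inverse (real (Suc n))) y \<partial>lborel)" for n
      unfolding F_def by (rule nn_integral_eq_integral[OF damped_energy_integrable])
                         (use gauss_damp_range in auto)
    show ?thesis
      unfolding eq by (rule tendsto_ennrealI[OF damped_energy_tendsto])
  qed
  ultimately show ?thesis
    using LIMSEQ_unique by blast
qed

end

text \<open>The integrand x^{s-1} e^{-x} of Euler's integral under x = b e^t, including the Jacobian.\<close>
lemma euler_integrand_exp_substitution: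
  fixes s :: complex and b :: real
  assumes b: "b > 0"
  shows "\<bar>b * exp t\<bar> *\<^sub>R (complex_of_real (b * exp t) powr (s - 1) / complex_of_real (exp (b * exp t)))
      = exp (s * complex_of_real (ln b + t)) * complex_of_real (exp (- b * exp t))"
proof -
  have pos: "b * exp t > 0" using b by simp
  have bt: "complex_of_real (b * exp t) = exp (complex_of_real (ln b + t))"
    using b by (simp only: exp_of_real) (simp add: exp_add)
  have "Ln (complex_of_real (b * exp t)) = complex_of_real (ln b + t)"
    using Ln_of_real[OF pos] b by (simp add: ln_mult del: of_real_mult)
  then have "complex_of_real (b * exp t) powr (s - 1) = exp ((s - 1) * complex_of_real (ln b + t))"
    unfolding powr_def using pos b by (simp del: of_real_mult)
  then have "\<bar>b * exp t\<bar> *\<^sub>R (complex_of_real (b * exp t) powr (s - 1) / complex_of_real (exp (b * exp t)))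
      = exp (complex_of_real (ln b + t)) * exp ((s - 1) * complex_of_real (ln b + t)) / complex_of_real (exp (b * exp t))"
    using pos unfolding bt[symmetric] by (simp add: scaleR_conv_of_real)
  also have "\<dots> = exp (s * complex_of_real (ln b + t)) * complex_of_real (exp (- b * exp t))"
    by (simp add: exp_add[symmetric] algebra_simps exp_minus field_simps of_real_exp[symmetric])
  finally show ?thesis .
qed

lemma euler_integral_exp_substitution:
  fixes s :: complex and b :: real
  assumes s: "Re s > 0" and b: "b > 0"
  shows "(\<lambda>t. exp (s * complex_of_real (ln b + t)) * complex_of_real (exp (- b * exp t)))
           absolutely_integrable_on UNIV"
    and "integral UNIV (\<lambda>t. exp (s * complex_of_real (ln b + t)) * complex_of_real (exp (- b * exp t)))
           = Gamma s"
proof -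
  define f where "f = (\<lambda>x::real. complex_of_real x powr (s - 1) / complex_of_real (exp x))"
  have img: "(\<lambda>t. b * exp t) ` UNIV = {0<..}"
  proof (auto simp: b)
    fix x :: real assume "x > 0"
    then have "x = b * exp (ln (x / b))" using b by simp
    then show "x \<in> range (\<lambda>t. b * exp t)" by blast
  qed
  have "(\<lambda>x. \<bar>b * exp x\<bar> *\<^sub>R f (b * exp x)) absolutely_integrable_on UNIV \<and>
      integral UNIV (\<lambda>x. \<bar>b * exp x\<bar> *\<^sub>R f (b * exp x)) = Gamma s"
  proof (rule has_absolute_integral_change_of_variables_real[THEN iffD2])
    show "((\<lambda>t. b * exp t) has_field_derivative b * exp x) (at x within UNIV)" for x
      by (auto intro!: derivative_eq_intros)
    show "inj_on (\<lambda>t. b * exp t) UNIV" using b by (auto simp: inj_on_def)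
    show "f absolutely_integrable_on (\<lambda>t. b * exp t) ` UNIV \<and> integral ((\<lambda>t. b * exp t) ` UNIV) f = Gamma s"
      unfolding img f_def
      using absolutely_integrable_Gamma_integral'[OF s] Gamma_integral_complex'[OF s]
      by (simp add: integral_unique)
  qed simp
  then show "(\<lambda>t. exp (s * complex_of_real (ln b + t)) * complex_of_real (exp (- b * exp t)))
           absolutely_integrable_on UNIV"
    and "integral UNIV (\<lambda>t. exp (s * complex_of_real (ln b + t)) * complex_of_real (exp (- b * exp t)))
           = Gamma s"
    unfolding f_def euler_integrand_exp_substitution[OF b] by auto
qed

lemma gamma_exp_integral:
  fixes s :: complex and b :: real
  assumes s: "Re s > 0" and b: "b > 0"
  shows "integrable lborel (\<lambda>t. exp (s * complex_of_real t) * complex_of_real (exp (- b * exp t)))"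
    and "(\<integral>t. exp (s * complex_of_real t) * complex_of_real (exp (- b * exp t)) \<partial>lborel)
         = Gamma s * exp (- s * complex_of_real (ln b))"
proof -
  define G where "G = (\<lambda>t. exp (s * complex_of_real (ln b + t)) * complex_of_real (exp (- b * exp t)))"
  have Gm[measurable]: "G \<in> borel_measurable borel" unfolding G_def by measurable
  have Gint: "integrable lborel G"
    using euler_integral_exp_substitution(1)[OF s b] integrable_completion[of G lborel]
    by (simp add: set_integrable_def G_def)
  have GI: "(\<integral>t. G t \<partial>lborel) = Gamma s"
    using integral_lborel[OF Gint] euler_integral_exp_substitution(2)[OF s b] by (simp add: G_def)
  have e: "(\<lambda>t. exp (s * complex_of_real t) * complex_of_real (exp (- b * exp t)))
      = (\<lambda>t. exp (- s * complex_of_real (ln b)) * G t)"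
    unfolding G_def by (auto simp: exp_minus field_simps distrib_left exp_add)
  show "integrable lborel (\<lambda>t. exp (s * complex_of_real t) * complex_of_real (exp (- b * exp t)))"
    unfolding e using Gint by simp
  show "(\<integral>t. exp (s * complex_of_real t) * complex_of_real (exp (- b * exp t)) \<partial>lborel)
         = Gamma s * exp (- s * complex_of_real (ln b))"
    unfolding e using GI by (simp add: mult.commute)
qed

definition gamma_profile :: "real \<Rightarrow> real \<Rightarrow> real \<Rightarrow> complex" where
  "gamma_profile a \<sigma> t = complex_of_real (exp (\<sigma> * t) * exp (- exp t / a))"

lemma gamma_profile_fourier:
  assumes a: "a > 0" and sg: "\<sigma> > 0"
  shows "integrable lborel (gamma_profile a \<sigma>)"
    and "fourier (gamma_profile a \<sigma>) y = Gamma (Complex \<sigma> y) * exp (Complex \<sigma> y * complex_of_real (ln a))"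
proof -
  have b: "1/a > 0" using a by simp
  have e1: "gamma_profile a \<sigma> = (\<lambda>t. exp (complex_of_real \<sigma> * complex_of_real t) * complex_of_real (exp (- (1/a) * exp t)))"
    unfolding gamma_profile_def by (auto simp flip: exp_of_real)
  show "integrable lborel (gamma_profile a \<sigma>)"
    unfolding e1 by (rule gamma_exp_integral(1)) (use sg b in auto)
  have "Complex \<sigma> y * complex_of_real t = complex_of_real (\<sigma> * t) + \<i> * complex_of_real (y * t)" for t
    by (simp add: complex_eq_iff)
  then have e2: "(\<lambda>t. exp (\<i> * complex_of_real (y * t)) * gamma_profile a \<sigma> t) =
     (\<lambda>t. exp (Complex \<sigma> y * complex_of_real t) * complex_of_real (exp (- (1/a) * exp t)))"
    unfolding e1 by (simp add: exp_add mult_ac)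
  have "fourier (gamma_profile a \<sigma>) y = Gamma (Complex \<sigma> y) * exp (- Complex \<sigma> y * complex_of_real (ln (1/a)))"
    unfolding fourier_def e2 by (rule gamma_exp_integral(2)) (use sg b in auto)
  then show "fourier (gamma_profile a \<sigma>) y = Gamma (Complex \<sigma> y) * exp (Complex \<sigma> y * complex_of_real (ln a))"
    using a by (simp add: ln_div)
qed

text \<open>The profile is bounded: \<sigma>t - e^t/a is maximal at e^t = \<sigma>a (from ln x \<le> x - 1).\<close>
lemma gamma_profile_bound:
  assumes a: "a > 0" and sg: "\<sigma> > 0"
  shows "norm (gamma_profile a \<sigma> t) \<le> exp (\<sigma> * ln (\<sigma> * a) - \<sigma>)"
proof -
  have "ln (exp t / (\<sigma> * a)) \<le> exp t / (\<sigma> * a) - 1"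
    using a sg by (intro ln_le_minus_one) auto
  then have "t - ln (\<sigma> * a) \<le> exp t / (\<sigma> * a) - 1"
    using a sg by (simp add: ln_div)
  then have "\<sigma> * (t - ln (\<sigma> * a)) \<le> \<sigma> * (exp t / (\<sigma> * a) - 1)"
    using sg by (intro mult_left_mono) auto
  moreover have "\<sigma> * (exp t / (\<sigma> * a) - 1) = exp t / a - \<sigma>" using sg a by (simp add: field_simps)
  ultimately have "\<sigma> * t - exp t / a \<le> \<sigma> * ln (\<sigma> * a) - \<sigma>"
    by (simp add: algebra_simps)
  then show ?thesis
    unfolding gamma_profile_def by (simp add: mult_exp_exp)
qed

definition exp_sum_weight :: "real set \<Rightarrow> (real \<Rightarrow> complex) \<Rightarrow> real \<Rightarrow> complex" where
  "exp_sum_weight A c t = (\<Sum>a\<in>A. (c a / complex_of_real a) * complex_of_real (exp (- exp t / a)))"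

definition exp_sum_profile :: "real set \<Rightarrow> (real \<Rightarrow> complex) \<Rightarrow> real \<Rightarrow> real \<Rightarrow> complex" where
  "exp_sum_profile A c \<sigma> t = (\<Sum>a\<in>A. (c a / complex_of_real a) * gamma_profile a \<sigma> t)"

lemma exp_sum_profile_eq: "exp_sum_profile A c \<sigma> t = complex_of_real (exp (\<sigma> * t)) * exp_sum_weight A c t"
  unfolding exp_sum_profile_def exp_sum_weight_def gamma_profile_def sum_distrib_left
  by (rule sum.cong[OF refl]) (simp add: mult_ac)

lemma exp_sum_profile_props:
  assumes A: "finite A" "A \<subseteq> {0<..}" and sg: "\<sigma> > 0"
  shows "continuous_on UNIV (exp_sum_profile A c \<sigma>)"
    and "integrable lborel (exp_sum_profile A c \<sigma>)"
    and "norm (exp_sum_profile A c \<sigma> t) \<le> (\<Sum>a\<in>A. norm (c a / complex_of_real a) * exp (\<sigma> * ln (\<sigma> * a) - \<sigma>))"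
proof -
  show "continuous_on UNIV (exp_sum_profile A c \<sigma>)"
    unfolding exp_sum_profile_def[abs_def] gamma_profile_def using A by (intro continuous_intros) auto
  show "integrable lborel (exp_sum_profile A c \<sigma>)"
    unfolding exp_sum_profile_def[abs_def] using gamma_profile_fourier(1) A sg
    by (intro Bochner_Integration.integrable_sum integrable_mult_right) auto
  show "norm (exp_sum_profile A c \<sigma> t) \<le> (\<Sum>a\<in>A. norm (c a / complex_of_real a) * exp (\<sigma> * ln (\<sigma> * a) - \<sigma>))"
    unfolding exp_sum_profile_def
  proof (rule order_trans[OF norm_sum], rule sum_mono)
    fix a assume "a \<in> A"
    then show "norm (c a / complex_of_real a * gamma_profile a \<sigma> t)
        \<le> norm (c a / complex_of_real a) * exp (\<sigma> * ln (\<sigma> * a) - \<sigma>)"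
      using gamma_profile_bound[of a \<sigma> t] A sg by (simp only: norm_mult) (auto intro!: mult_left_mono)
  qed
qed

lemma exp_sum_profile_fourier:
  assumes A: "finite A" "A \<subseteq> {0<..}" and sg: "\<sigma> > 0"
  shows "fourier (exp_sum_profile A c \<sigma>) y = Gamma (Complex \<sigma> y) * (\<Sum>a\<in>A. c a * expfun a (Complex (\<sigma> - 1) y))"
proof -
  have int: "integrable lborel (\<lambda>t. exp (\<i> * complex_of_real (y * t)) * gamma_profile a \<sigma> t)" if "a \<in> A" for a
  proof (rule Bochner_Integration.integrable_bound[OF integrable_norm[OF gamma_profile_fourier(1)]])
    show "(\<lambda>t. exp (\<i> * complex_of_real (y * t)) * gamma_profile a \<sigma> t) \<in> borel_measurable lborel"
      unfolding gamma_profile_def by measurable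
    show "AE t in lborel. norm (exp (\<i> * complex_of_real (y * t)) * gamma_profile a \<sigma> t) \<le> norm (norm (gamma_profile a \<sigma> t))"
      by (simp add: norm_mult)
  qed (use that A sg in auto)
  have "fourier (exp_sum_profile A c \<sigma>) y
      = (\<integral>t. (\<Sum>a\<in>A. (c a / complex_of_real a) * (exp (\<i> * complex_of_real (y * t)) * gamma_profile a \<sigma> t)) \<partial>lborel)"
    unfolding fourier_def exp_sum_profile_def by (simp add: sum_distrib_left mult_ac)
  also have "\<dots> = (\<Sum>a\<in>A. (c a / complex_of_real a) * fourier (gamma_profile a \<sigma>) y)"
    unfolding fourier_def using int by (simp add: Bochner_Integration.integral_sum)
  also have "\<dots> = Gamma (Complex \<sigma> y) * (\<Sum>a\<in>A. c a * expfun a (Complex (\<sigma> - 1) y))"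
    unfolding sum_distrib_left
  proof (rule sum.cong[OF refl])
    fix a assume "a \<in> A"
    then have a: "a > 0" using A by auto
    have "Complex \<sigma> y * complex_of_real (ln a) = complex_of_real (ln a) + Complex (\<sigma> - 1) y * complex_of_real (ln a)"
      by (simp add: complex_eq_iff algebra_simps)
    then have "exp (Complex \<sigma> y * complex_of_real (ln a)) = complex_of_real a * exp (Complex (\<sigma> - 1) y * complex_of_real (ln a))"
      using a by (simp add: exp_add exp_of_real)
    then show "c a / complex_of_real a * fourier (gamma_profile a \<sigma>) y = Gamma (Complex \<sigma> y) * (c a * expfun a (Complex (\<sigma> - 1) y))"
      using gamma_profile_fourier(2)[OF a sg, of y] a unfolding expfun_def by (simp add: field_simps)
  qed
  finally show ?thesis .
qed

text \<open>Density of the line integral of an exponential sum in the variable t = log x: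
  e^{kt} |W(t)|^2, with k = n + 2 for the line Re z = n/2.\<close>
definition line_density :: "real set \<Rightarrow> (real \<Rightarrow> complex) \<Rightarrow> nat \<Rightarrow> real \<Rightarrow> real" where
  "line_density A c k t = exp t ^ k * (norm (exp_sum_weight A c t))\<^sup>2"

lemma exp_sum_profile_sq:
  assumes n: "n \<ge> -1"
  shows "(norm (exp_sum_profile A c (real_of_int n / 2 + 1) t))\<^sup>2 = line_density A c (nat (n+2)) t"
proof -
  have "exp t ^ nat (n+2) = exp (real (nat (n+2)) * t)" by (simp add: exp_of_nat_mult)
  also have "\<dots> = exp (2 * ((real_of_int n / 2 + 1) * t))" using n by (simp add: algebra_simps)
  also have "\<dots> = (exp ((real_of_int n / 2 + 1) * t))\<^sup>2" by (rule exp_double)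
  finally show ?thesis
    unfolding line_density_def exp_sum_profile_eq by (simp add: norm_mult power_mult_distrib)
qed

text \<open>Integrability of the line densities, via |h|^2 \<le> (sup |h|) |h| for the bounded integrable profile.\<close>
lemma line_density_integrable:
  assumes A: "finite A" "A \<subseteq> {0<..}" and n: "n \<ge> -1"
  shows "integrable lborel (line_density A c (nat (n+2)))"
proof -
  define \<sigma> where "\<sigma> = real_of_int n / 2 + 1"
  have sg: "\<sigma> > 0" using n unfolding \<sigma>_def by linarith
  note hp = exp_sum_profile_props[OF A sg, of c]
  define Bh where "Bh = (\<Sum>a\<in>A. norm (c a / complex_of_real a) * exp (\<sigma> * ln (\<sigma> * a) - \<sigma>))"
  have [measurable]: "exp_sum_profile A c \<sigma> \<in> borel_measurable borel"
    using hp(1) by (rule borel_measurable_continuous_onI)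
  have "integrable lborel (\<lambda>t. (norm (exp_sum_profile A c \<sigma> t))\<^sup>2)"
  proof (rule Bochner_Integration.integrable_bound[where f="\<lambda>t. Bh * norm (exp_sum_profile A c \<sigma> t)"])
    show "integrable lborel (\<lambda>t. Bh * norm (exp_sum_profile A c \<sigma> t))"
      using hp(2) by (intro integrable_mult_right integrable_norm)
    show "AE t in lborel. norm ((norm (exp_sum_profile A c \<sigma> t))\<^sup>2) \<le> norm (Bh * norm (exp_sum_profile A c \<sigma> t))"
    proof (intro AE_I2)
      fix t
      have b: "norm (exp_sum_profile A c \<sigma> t) \<le> Bh" using hp(3) unfolding Bh_def .
      then have "Bh \<ge> 0" using norm_ge_zero order_trans by blast
      then show "norm ((norm (exp_sum_profile A c \<sigma> t))\<^sup>2) \<le> norm (Bh * norm (exp_sum_profile A c \<sigma> t))"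
        using b by (simp add: power2_eq_square abs_mult mult_right_mono)
    qed
  qed measurable
  then show ?thesis unfolding \<sigma>_def exp_sum_profile_sq[OF n] .
qed

text \<open>Line integrals of exponential sums, by Plancherel: the weight |\<Gamma>|^2/(2\<pi>(n+1)!) of \<mu>
  cancels against the Fourier transform of the profile.\<close>
lemma line_int_exp_sum:
  assumes A: "finite A" "A \<subseteq> {0<..}" and n: "n \<ge> -1"
  shows "line_int (\<lambda>z. \<Sum>a\<in>A. c a * expfun a z) n
     = ennreal ((\<integral>t. line_density A c (nat (n+2)) t \<partial>lborel) / fact (nat (n+1)))"
proof -
  define \<sigma> where "\<sigma> = real_of_int n / 2 + 1"
  have sg: "\<sigma> > 0" using n unfolding \<sigma>_def by linarith
  define C where "C = 1 / (2 * pi * fact (nat (n+1)))"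
  have C0: "C \<ge> 0" unfolding C_def by simp
  note hp = exp_sum_profile_props[OF A sg, of c]
  have pw: "(cmod ((\<lambda>z. \<Sum>a\<in>A. c a * expfun a z) (Complex (real_of_int n / 2) y)))\<^sup>2 * mu_weight n y
      = (norm (fourier (exp_sum_profile A c \<sigma>) y))\<^sup>2 * C" for y
    using exp_sum_profile_fourier[OF A sg, of c y] unfolding \<sigma>_def mu_weight_def C_def
    by (simp add: norm_mult power_mult_distrib)
  have [measurable]: "fourier (exp_sum_profile A c \<sigma>) \<in> borel_measurable borel"
    by (rule fourier_measurable[OF hp(1) hp(2) hp(3)])
  have "line_int (\<lambda>z. \<Sum>a\<in>A. c a * expfun a z) n
      = (\<integral>\<^sup>+y. ennreal ((norm (fourier (exp_sum_profile A c \<sigma>) y))\<^sup>2) * ennreal C \<partial>lborel)"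
    unfolding line_int_def pw using C0 by (simp add: ennreal_mult)
  also have "\<dots> = ennreal (2*pi * (\<integral>t. (norm (exp_sum_profile A c \<sigma> t))\<^sup>2 \<partial>lborel)) * ennreal C"
    by (simp add: nn_integral_multc plancherel[OF hp(1) hp(2) hp(3)])
  also have "\<dots> = ennreal ((\<integral>t. line_density A c (nat (n+2)) t \<partial>lborel) / fact (nat (n+1)))"
  proof -
    have "0 \<le> (\<integral>t. line_density A c (nat (n+2)) t \<partial>lborel)"
      by (simp add: line_density_def)
    then show ?thesis
      using C0 unfolding \<sigma>_def exp_sum_profile_sq[OF n] by (simp add: ennreal_mult[symmetric] C_def)
  qed
  finally show ?thesis .
qed

text \<open>The pointwise inequality behind the three-line estimate, with E = e^t and K = |W(t)|^2:
  after dividing by E^{m+1}K/m! it reads E \<le> (m+1)(m+2) + E^2.\<close>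
lemma factorial_weight_ineq:
  fixes E K :: real and m :: nat
  assumes E: "E > 0" and K: "K \<ge> 0"
  shows "E^(m+2) * K / fact (m+1) \<le> (real m + 2) * (E^(m+1) * K / fact m + E^(m+3) * K / fact (m+2))"
proof -
  define P where "P = E^(m+1) * K"
  have P: "P \<ge> 0" "E^(m+2) * K = E * P" "E^(m+3) * K = E\<^sup>2 * P"
    unfolding P_def using E K by (simp_all add: power_add power2_eq_square power3_eq_cube)
  have F: "(fact m :: real) > 0" by simp
  have split: "b * (P / fact m + E\<^sup>2 * P / (b * (a * fact m))) = (a * b * P + E\<^sup>2 * P) / (a * fact m)"
    if "a > 0" "b > 0" for a b :: real
    using that F by (simp add: field_simps)
  have "E \<le> 1 + E\<^sup>2" using E sum_squares_ge_zero[of "E - 1" 0] by (simp add: power2_eq_square algebra_simps)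
  also have "\<dots> \<le> (real m + 1) * (real m + 2) + E\<^sup>2" by (simp add: algebra_simps)
  finally have "E * P \<le> ((real m + 1) * (real m + 2) + E\<^sup>2) * P"
    using P(1) by (rule mult_right_mono)
  then have "E * P \<le> (real m + 1) * (real m + 2) * P + E\<^sup>2 * P"
    by (simp only: distrib_right)
  then have "E * P / ((real m + 1) * fact m) \<le> ((real m + 1) * (real m + 2) * P + E\<^sup>2 * P) / ((real m + 1) * fact m)"
    by (rule divide_right_mono) simp
  also have "\<dots> = (real m + 2) * (P / fact m + E\<^sup>2 * P / ((real m + 2) * ((real m + 1) * fact m)))"
    by (rule split[symmetric]) auto
  finally show ?thesis
    unfolding P(2,3) P_def[symmetric] by (simp add: algebra_simps)
qed

lemma exp_sum_three_lines:
  fixes A :: "real set" and c :: "real \<Rightarrow> complex"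
  assumes A: "finite A" "A \<subseteq> {0<..}"
  defines "g \<equiv> \<lambda>z. \<Sum>a\<in>A. c a * expfun a z"
  shows "line_int g (int m) \<le> ennreal (real m + 2) * (line_int g (int m - 1) + line_int g (int m + 1))"
proof -
  define I where "I k = (\<integral>t. line_density A c k t \<partial>lborel)" for k
  have int: "integrable lborel (line_density A c k)" if "k \<ge> 1" for k
    using line_density_integrable[OF A, of "int k - 2"] that by simp
  have line: "line_int g (int j - 1) = ennreal (I (j+1) / fact j)" for j
    using line_int_exp_sum[OF A, of "int j - 1"] unfolding g_def I_def by (simp add: nat_add_distrib)
  have I0: "I k \<ge> 0" for k
    unfolding I_def line_density_def by simp
  have "I (m+2) / fact (m+1) = (\<integral>t. line_density A c (m+2) t / fact (m+1) \<partial>lborel)"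
    unfolding I_def by simp
  also have "\<dots> \<le> (\<integral>t. (real m + 2) * (line_density A c (m+1) t / fact m
                        + line_density A c (m+3) t / fact (m+2)) \<partial>lborel)"
  proof (rule integral_mono)
    show "line_density A c (m+2) t / fact (m+1)
        \<le> (real m + 2) * (line_density A c (m+1) t / fact m + line_density A c (m+3) t / fact (m+2))" for t
      unfolding line_density_def
      using factorial_weight_ineq[of "exp t" "(norm (exp_sum_weight A c t))\<^sup>2" m] by (simp add: mult.assoc)
  qed (use int[of "m+2"] int[of "m+1"] int[of "m+3"]
        in \<open>auto intro!: integrable_mult_right Bochner_Integration.integrable_add\<close>)
  also have "\<dots> = (real m + 2) * (I (m+1) / fact m + I (m+3) / fact (m+2))"
    unfolding I_def using int[of "m+1"] int[of "m+3"] by simp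
  finally have "I (m+2) / fact (m+1) \<le> (real m + 2) * (I (m+1) / fact m + I (m+3) / fact (m+2))" .
  moreover have "line_int g (int m) = ennreal (I (m+2) / fact (m+1))"
    using line[of "m+1"] by simp
  moreover have "line_int g (int m + 1) = ennreal (I (m+3) / fact (m+2))"
  proof -
    have "int (m+2) - 1 = int m + 1" "m + 2 + 1 = m + 3" by simp_all
    then show ?thesis using line[of "m+2"] by (simp only:)
  qed
  ultimately show ?thesis
    unfolding line[of m] using I0
    by (simp add: ennreal_mult[symmetric] ennreal_plus[symmetric] del: ennreal_plus)
qed

text \<open>Partial sums of the line integrals, omitting the indices k (line Re z = (k-1)/2) with P k.\<close>
definition lines_except :: "(nat \<Rightarrow> bool) \<Rightarrow> (complex \<Rightarrow> complex) \<Rightarrow> ennreal" where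
  "lines_except P f = (\<Sum>k. if P k then 0 else line_int f (int k - 1))"

lemma L2mu_normsq_lines: "L2mu_normsq f = lines_except (\<lambda>_. False) f"
  unfolding lines_except_def L2mu_normsq_def by simp

lemma lines_except_le_normsq: "lines_except P f \<le> L2mu_normsq f"
  unfolding lines_except_def L2mu_normsq_def by (rule suminf_le[OF _ summableI summableI]) auto

lemma L2mu_normsq_split:
  "L2mu_normsq f = lines_except (\<lambda>k. k = m + 1) f + line_int f (int m)"
proof -
  have "L2mu_normsq f = (\<Sum>k. (if k = m + 1 then 0 else line_int f (int k - 1))
                            + (if k = m + 1 then line_int f (int k - 1) else 0))"
    unfolding L2mu_normsq_def by (rule suminf_cong) auto
  also have "\<dots> = lines_except (\<lambda>k. k = m + 1) f + (\<Sum>k. if k = m + 1 then line_int f (int k - 1) else 0)"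
    unfolding lines_except_def by (rule suminf_add[OF summableI summableI, symmetric])
  also have "(\<Sum>k. if k = m + 1 then line_int f (int k - 1) else 0) = line_int f (int m)"
    using sums_unique[OF sums_single[of "m+1" "\<lambda>k. line_int f (int k - 1)"]] by simp
  finally show ?thesis .
qed

lemma neighbour_lines_le:
  "line_int f (int m - 1) + line_int f (int m + 1) \<le> lines_except (\<lambda>k. k = m + 1) f"
proof -
  have "line_int f (int m - 1) + line_int f (int m + 1)
     = (\<Sum>k\<in>{m, m+2}. if k = m + 1 then 0 else line_int f (int k - 1))"
    by (simp add: add.commute)
  also have "\<dots> \<le> lines_except (\<lambda>k. k = m + 1) f"
    unfolding lines_except_def by (rule sum_le_suminf[OF summableI]) auto
  finally show ?thesis .
qed

text \<open>The theorem on the span of the exponentials: T = S_m + I_m \<le> S_m + (m+2) S_m.\<close>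
lemma exp_sum_bound:
  assumes g: "g \<in> span_exp"
  shows "L2mu_normsq g \<le> ennreal (real m + 3) * lines_except (\<lambda>k. k = m + 1) g"
proof -
  obtain A c where gd: "g = (\<lambda>z. \<Sum>a\<in>A. c a * expfun a z)" and A: "finite A" "A \<subseteq> {0<..1}"
    using g unfolding span_exp_def by auto
  define S where "S = lines_except (\<lambda>k. k = m + 1) g"
  have "line_int g (int m) \<le> ennreal (real m + 2) * (line_int g (int m - 1) + line_int g (int m + 1))"
    unfolding gd by (rule exp_sum_three_lines) (use A in auto)
  also have "\<dots> \<le> ennreal (real m + 2) * S"
    unfolding S_def by (intro mult_left_mono neighbour_lines_le) simp
  finally have "S + line_int g (int m) \<le> S + ennreal (real m + 2) * S"
    by (rule add_left_mono)
  also have "\<dots> = ennreal (real m + 3) * S"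
  proof -
    have "ennreal (real m + 3) = ennreal 1 + ennreal (real m + 2)"
      by (subst ennreal_plus[symmetric]) (auto simp: add.commute)
    then show ?thesis by (simp only: distrib_right ennreal_1 mult_1_left)
  qed
  finally show ?thesis
    unfolding S_def L2mu_normsq_split[of g m] .
qed

text \<open>Weighted triangle inequality |a+b|^2 \<le> (1+\<delta>)|a|^2 + (1+1/\<delta>)|b|^2 (from 2|a||b| \<le> \<delta>|a|^2 + |b|^2/\<delta>),
  which controls the line integrals under approximation.\<close>
lemma norm_add_sq_le:
  fixes a b :: complex and \<delta> :: real
  assumes d: "\<delta> > 0"
  shows "(norm (a + b))\<^sup>2 \<le> (1+\<delta>) * (norm a)\<^sup>2 + (1 + 1/\<delta>) * (norm b)\<^sup>2"
proof -
  define x where "x = norm a"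
  define y where "y = norm b"
  have "norm (a + b) \<le> x + y" unfolding x_def y_def by (rule norm_triangle_ineq)
  then have "(norm (a + b))\<^sup>2 \<le> (x + y)\<^sup>2" by (intro power_mono) auto
  also have "\<dots> \<le> (1+\<delta>) * x\<^sup>2 + (1 + 1/\<delta>) * y\<^sup>2"
  proof -
    have "0 \<le> (\<delta> * x - y)\<^sup>2" by simp
    then have "2 * \<delta> * x * y \<le> \<delta>\<^sup>2 * x\<^sup>2 + y\<^sup>2" by (simp add: power2_eq_square algebra_simps)
    then have "2 * x * y \<le> \<delta> * x\<^sup>2 + y\<^sup>2 / \<delta>" using d
      by (simp add: field_simps power2_eq_square)
    then show ?thesis using d by (simp add: power2_eq_square field_simps)
  qed
  finally show ?thesis unfolding x_def y_def .
qed

definition lines_meas :: "(complex \<Rightarrow> complex) \<Rightarrow> bool" where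
  "lines_meas f \<longleftrightarrow> (\<forall>n::int. n \<ge> -1 \<longrightarrow> (\<lambda>y. f (Complex (real_of_int n / 2) y)) \<in> borel_measurable borel)"

lemma lines_meas_diff: "lines_meas f \<Longrightarrow> lines_meas g \<Longrightarrow> lines_meas (\<lambda>z. f z - g z)"
  unfolding lines_meas_def by (auto intro!: borel_measurable_diff)

lemma lines_meas_exp_sum: "g \<in> span_exp \<Longrightarrow> lines_meas g"
  unfolding span_exp_def lines_meas_def expfun_def Complex_eq
  by (auto intro!: borel_measurable_continuous_onI continuous_intros)

text \<open>The density of \<mu> is continuous on every line, since \<Gamma> has no poles in Re z > 0.\<close>
lemma mu_weight_measurable:
  assumes n: "n \<ge> -1"
  shows "mu_weight n \<in> borel_measurable borel"
proof -
  have "isCont (\<lambda>y. Gamma (Complex (real_of_int n / 2 + 1) y)) y" for y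
  proof (rule isCont_Gamma)
    show "isCont (\<lambda>y. Complex (real_of_int n / 2 + 1) y) y"
      unfolding Complex_eq by (intro continuous_intros)
    show "Complex (real_of_int n / 2 + 1) y \<notin> \<int>\<^sub>\<le>\<^sub>0"
      using n by (auto elim!: nonpos_Ints_cases simp: complex_eq_iff)
  qed
  then have [measurable]: "(\<lambda>y. Gamma (Complex (real_of_int n / 2 + 1) y)) \<in> borel_measurable borel"
    by (intro borel_measurable_continuous_onI continuous_at_imp_continuous_on) auto
  show ?thesis unfolding mu_weight_def[abs_def] by measurable
qed

lemma line_int_approx:
  assumes d: "\<delta> > 0" and n: "n \<ge> -1" and mg: "lines_meas g" and mfg: "lines_meas (\<lambda>z. f z - g z)"
  shows "line_int f n \<le> ennreal (1+\<delta>) * line_int g n + ennreal (1 + 1/\<delta>) * line_int (\<lambda>z. f z - g z) n"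
proof -
  define x where "x = real_of_int n / 2"
  have [measurable]: "mu_weight n \<in> borel_measurable borel"
    "(\<lambda>y. g (Complex x y)) \<in> borel_measurable borel"
    "(\<lambda>y. f (Complex x y) - g (Complex x y)) \<in> borel_measurable borel"
    using mu_weight_measurable[OF n] mg mfg n unfolding lines_meas_def x_def by auto
  have w0: "mu_weight n y \<ge> 0" for y unfolding mu_weight_def by simp
  have "line_int f n \<le> (\<integral>\<^sup>+y. ennreal (1+\<delta>) * ennreal ((cmod (g (Complex x y)))\<^sup>2 * mu_weight n y)
      + ennreal (1 + 1/\<delta>) * ennreal ((cmod (f (Complex x y) - g (Complex x y)))\<^sup>2 * mu_weight n y) \<partial>lborel)"
    unfolding line_int_def x_def[symmetric]
  proof (rule nn_integral_mono)
    fix y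
    have "(cmod (g (Complex x y) + (f (Complex x y) - g (Complex x y))))\<^sup>2 * mu_weight n y
        \<le> ((1+\<delta>) * (cmod (g (Complex x y)))\<^sup>2 + (1 + 1/\<delta>) * (cmod (f (Complex x y) - g (Complex x y)))\<^sup>2) * mu_weight n y"
      by (rule mult_right_mono[OF norm_add_sq_le[OF d] w0])
    then show "ennreal ((cmod (f (Complex x y)))\<^sup>2 * mu_weight n y)
       \<le> ennreal (1+\<delta>) * ennreal ((cmod (g (Complex x y)))\<^sup>2 * mu_weight n y)
        + ennreal (1 + 1/\<delta>) * ennreal ((cmod (f (Complex x y) - g (Complex x y)))\<^sup>2 * mu_weight n y)"
      using d w0[of y]
      by (simp add: ennreal_mult[symmetric] ennreal_plus[symmetric] algebra_simps del: ennreal_plus)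
  qed
  also have "\<dots> = ennreal (1+\<delta>) * line_int g n + ennreal (1 + 1/\<delta>) * line_int (\<lambda>z. f z - g z) n"
    unfolding line_int_def x_def[symmetric]
    by (subst nn_integral_add) (auto simp: nn_integral_cmult)
  finally show ?thesis .
qed

lemma lines_except_approx:
  assumes d: "\<delta> > 0" and mg: "lines_meas g" and mfg: "lines_meas (\<lambda>z. f z - g z)"
  shows "lines_except P f \<le> ennreal (1+\<delta>) * lines_except P g + ennreal (1 + 1/\<delta>) * lines_except P (\<lambda>z. f z - g z)"
proof -
  have "lines_except P f
     \<le> (\<Sum>k. ennreal (1+\<delta>) * (if P k then 0 else line_int g (int k - 1))
          + ennreal (1 + 1/\<delta>) * (if P k then 0 else line_int (\<lambda>z. f z - g z) (int k - 1)))"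
    unfolding lines_except_def
    using line_int_approx[OF d _ mg mfg] by (intro suminf_le summableI) auto
  also have "\<dots> = ennreal (1+\<delta>) * lines_except P g + ennreal (1 + 1/\<delta>) * lines_except P (\<lambda>z. f z - g z)"
    unfolding lines_except_def by (simp add: suminf_add[OF summableI summableI, symmetric])
  finally show ?thesis .
qed

lemma approximation_step:
  fixes Tf Tg Sf Sg D :: ennreal and C \<delta> :: real
  assumes d: "0 < \<delta>" "\<delta> < 1" and C: "C \<ge> 0"
    and Tf: "Tf \<le> ennreal (1+\<delta>) * Tg + ennreal (1 + 1/\<delta>) * D"
    and Tg: "Tg \<le> ennreal C * Sg"
    and Sg: "Sg \<le> ennreal (1+\<delta>) * Sf + ennreal (1 + 1/\<delta>) * D"
    and D: "D \<le> ennreal (\<delta>\<^sup>2)"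
  shows "Tf \<le> ennreal ((1+\<delta>)\<^sup>2) * (ennreal C * Sf) + ennreal (2 * (2*C + 1) * \<delta>)"
proof -
  define a b where "a = ennreal (1+\<delta>)" and "b = ennreal (1 + 1/\<delta>)"
  have error: "(a * ennreal C * b + b) * D \<le> ennreal (2 * (2*C + 1) * \<delta>)"
  proof -
    have "(a * ennreal C * b + b) * D \<le> (a * ennreal C * b + b) * ennreal (\<delta>\<^sup>2)"
      using D by (rule mult_left_mono) simp
    also have "\<dots> = ennreal (((1+\<delta>) * C * (1 + 1/\<delta>) + (1 + 1/\<delta>)) * \<delta>\<^sup>2)"
      unfolding a_def b_def using d C
      by (simp add: ennreal_mult[symmetric] ennreal_plus[symmetric] del: ennreal_plus)
    also have "((1+\<delta>) * C * (1 + 1/\<delta>) + (1 + 1/\<delta>)) * \<delta>\<^sup>2 = ((1+\<delta>) * C + 1) * (\<delta>\<^sup>2 + \<delta>)"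
      using d by (simp add: field_simps power2_eq_square)
    also have "ennreal (((1+\<delta>) * C + 1) * (\<delta>\<^sup>2 + \<delta>)) \<le> ennreal ((2*C + 1) * (2 * \<delta>))"
      using d C by (intro ennreal_leI mult_mono) (auto simp: power2_eq_square intro: mult_right_mono)
    finally show ?thesis
      by (simp add: mult_ac)
  qed
  have "Tf \<le> a * Tg + b * D"
    using Tf unfolding a_def b_def .
  also have "\<dots> \<le> a * (ennreal C * (a * Sf + b * D)) + b * D"
    using Tg Sg unfolding a_def b_def by (intro add_right_mono mult_left_mono order.trans[OF Tg]) auto
  also have "\<dots> = (a * a) * (ennreal C * Sf) + (a * ennreal C * b + b) * D"
    by (simp add: algebra_simps)
  also have "\<dots> \<le> (a * a) * (ennreal C * Sf) + ennreal (2 * (2*C + 1) * \<delta>)"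
    using error by (rule add_left_mono)
  also have "a * a = ennreal ((1+\<delta>)\<^sup>2)"
    unfolding a_def using d by (simp add: power2_eq_square ennreal_mult)
  finally show ?thesis .
qed

lemma ennreal_le_of_approx:
  fixes x y :: ennreal and K :: real
  assumes K: "K \<ge> 0"
    and approx: "\<And>\<delta>. 0 < \<delta> \<Longrightarrow> \<delta> < 1 \<Longrightarrow> x \<le> ennreal ((1+\<delta>)\<^sup>2) * y + ennreal (K * \<delta>)"
  shows "x \<le> y"
proof (cases y)
  case (real s)
  have nonneg: "0 \<le> (1+\<delta>)\<^sup>2 * s + K * \<delta>" if "0 < \<delta>" for \<delta>
    using real that K by simp
  have bound: "x \<le> ennreal ((1+\<delta>)\<^sup>2 * s + K * \<delta>)" if "0 < \<delta>" "\<delta> < 1" for \<delta>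
    using approx[OF that] real that K by (simp add: ennreal_mult ennreal_plus)
  obtain t where t: "x = ennreal t"
    using bound[of "1/2"] by (cases x) (auto simp: top_unique)
  have "((\<lambda>\<delta>. (1+\<delta>)\<^sup>2 * s + K * \<delta>) \<longlongrightarrow> (1+0)\<^sup>2 * s + K * 0) (at_right 0)"
    by (intro tendsto_intros)
  moreover have "\<forall>\<^sub>F \<delta> in at_right 0. t \<le> (1+\<delta>)\<^sup>2 * s + K * \<delta>"
    using bound nonneg unfolding t by (intro eventually_at_rightI[of 0 1]) auto
  ultimately have "t \<le> s"
    by (intro tendsto_lowerbound[where F="at_right (0::real)"]) auto
  then show ?thesis
    unfolding t real by (rule ennreal_leI)
qed simp

text \<open>For 0 < \<delta> < 1 pick g in the span with T(f - g) < \<delta>^2; the approximation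
  estimates for T and S_m, the inequality T(g) \<le> (m+3) S_m(g) on the span and
  S_m(g - f) \<le> T(f - g) give T(f) \<le> (1+\<delta>)^2 (m+3) S_m(f) + O(\<delta>).\<close>
theorem mainTheorem6:
  fixes f :: "complex \<Rightarrow> complex" and m :: nat
  assumes "H2mu f"
  shows "L2mu_normsq f \<le> ennreal (real m + 3) *
           (\<Sum>k. if k = m + 1 then 0 else line_int f (int k - 1))"
  unfolding lines_except_def[symmetric]
proof (rule ennreal_le_of_approx)
  let ?S = "lines_except (\<lambda>k. k = m + 1)"
  fix \<delta> :: real assume d: "0 < \<delta>" "\<delta> < 1"
  have f: "lines_meas f"
    using assms unfolding H2mu_def in_L2mu_def lines_meas_def by simp
  have "\<delta>\<^sup>2 > 0" using d by simp
  then obtain g where g: "g \<in> span_exp" and D: "L2mu_normsq (\<lambda>z. f z - g z) < ennreal (\<delta>\<^sup>2)"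
    using assms unfolding H2mu_def by blast
  have g_meas: "lines_meas g" by (rule lines_meas_exp_sum[OF g])
  have Tf: "L2mu_normsq f \<le> ennreal (1+\<delta>) * L2mu_normsq g + ennreal (1 + 1/\<delta>) * L2mu_normsq (\<lambda>z. f z - g z)"
    using lines_except_approx[OF d(1) g_meas lines_meas_diff[OF f g_meas]] by (simp add: L2mu_normsq_lines)
  have "?S (\<lambda>z. g z - f z) \<le> L2mu_normsq (\<lambda>z. f z - g z)"
    using lines_except_le_normsq[of _ "\<lambda>z. g z - f z"]
    unfolding L2mu_normsq_def line_int_def by (simp add: norm_minus_commute)
  then have Sg: "?S g \<le> ennreal (1+\<delta>) * ?S f + ennreal (1 + 1/\<delta>) * L2mu_normsq (\<lambda>z. f z - g z)"
    using lines_except_approx[OF d(1) f lines_meas_diff[OF g_meas f]]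
    by (meson add_left_mono mult_left_mono order.trans zero_le)
  show "L2mu_normsq f \<le> ennreal ((1+\<delta>)\<^sup>2) * (ennreal (real m + 3) * ?S f)
      + ennreal (2 * (2 * (real m + 3) + 1) * \<delta>)"
    by (rule approximation_step[OF d _ Tf exp_sum_bound[OF g] Sg]) (use D in auto)
qed simp

end
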